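(* Let $f\in\mathrm{Dom}_+(\Gamma)$. Suppose that (i) $f\to\infty$; (ii) there is an increasing (not necessarily strictly) function $g:[0,\infty)\to[0,\infty)$ such that $G(z):=\int_0^z\frac{dy}{g(y)}<\infty$ for all $z\ge0$ and $\lim_{z\to\infty}G(z)=\infty$; (iii) $\Gamma f(x)\le g(f(x))$ for all $x\in\mathbb X$. Then $\mathbb P_x(\zeta=+\infty)=1$ for all $x\in\mathbb X$.
   Context: Let $\mathbb X$ be a countably infinite set and $\Gamma=(\Gamma_{xy})_{x,y\in\mathbb X}$ a matrix with $\Gamma_{xy}\ge0$ for $y\ne x$, $\gamma_x:=\sum_{y\ne x}\Gamma_{xy}$, $\Gamma_{xx}=-\gamma_x$, and $0<\gamma_x<\infty$ for all $x$. Let $P_{xy}=\Gamma_{xy}/\gamma_x$ for $y\neq x$ and $P_{xx}=0$; the discrete-time chain $(\tilde\xi_n)$ with transition matrix $P$ (embedded jump chain) is assumed irreducible. The continuous-time Markov chain $(\xi_t)_{t\ge0}$ with generator $\Gamma$: conditionally on $\tilde\xi$, holding times $\sigma_n$ ($n\ge1$) are independent exponential with parameter $\gamma_{\tilde\xi_{n-1}}$; $J_0=0$, $J_n=\sigma_1+\dots+\sigma_n$; explosion time $\zeta=\lim_n J_n$; $\xi_t=\tilde\xi_n$ on $[J_n,J_{n+1})$ and $\xi_t=\partial$ (cemetery) for $t\ge\zeta$. $\mathbb P_x$ refers to $\xi_0=x$. $\mathrm{Dom}(\Gamma)=\{f:\mathbb X\to\mathbb R:\ \sum_{y\ne x}\Gamma_{xy}|f(y)|<\infty\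 \forall x\}$, $\mathrm{Dom}_+(\Gamma)$ its non-negative elements, $\Gamma f(x)=\sum_{y}\Gamma_{xy}f(y)$. "$f\to\infty$" means $\{x: f(x)\le n\}$ is finite for every $n\in\mathbb N$. *)

theory Defs
  imports "HOL-Probability.Probability"
begin

definition total_rate :: "('a \<Rightarrow> 'a \<Rightarrow> real) \<Rightarrow> 'a \<Rightarrow> real" where
  "total_rate \<Gamma> x = infsum (\<lambda>y. \<Gamma> x y) (UNIV - {x})"

definition is_generator :: "('a \<Rightarrow> 'a \<Rightarrow> real) \<Rightarrow> bool" where
  "is_generator \<Gamma> \<longleftrightarrow>
     (\<forall>x y. x \<noteq> y \<longrightarrow> \<Gamma> x y \<ge> 0) \<and>
     (\<forall>x. (\<lambda>y. \<Gamma> x y) summable_on (UNIV - {x})) \<and>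
     (\<forall>x. 0 < total_rate \<Gamma> x) \<and>
     (\<forall>x. \<Gamma> x x = - total_rate \<Gamma> x)"

definition jump_matrix :: "('a \<Rightarrow> 'a \<Rightarrow> real) \<Rightarrow> 'a \<Rightarrow> 'a \<Rightarrow> real" where
  "jump_matrix \<Gamma> x y = (if x = y then 0 else \<Gamma> x y / total_rate \<Gamma> x)"

definition jump_irreducible :: "('a \<Rightarrow> 'a \<Rightarrow> real) \<Rightarrow> bool" where
  "jump_irreducible \<Gamma> \<longleftrightarrow>
     (\<forall>x y. (x, y) \<in> {(u, v). jump_matrix \<Gamma> u v > 0}\<^sup>*)"

definition in_Dom :: "('a \<Rightarrow> 'a \<Rightarrow> real) \<Rightarrow> ('a \<Rightarrow> real) \<Rightarrow> bool" where
  "in_Dom \<Gamma> f \<longleftrightarrow> (\<forall>x. (\<lambda>y. \<Gamma> x y * \<bar>f y\<bar>) summable_on (UNIV - {x}))"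

definition gen_apply :: "('a \<Rightarrow> 'a \<Rightarrow> real) \<Rightarrow> ('a \<Rightarrow> real) \<Rightarrow> 'a \<Rightarrow> real" where
  "gen_apply \<Gamma> f x = infsum (\<lambda>y. \<Gamma> x y * f y) UNIV"

definition tends_to_infinity :: "('a \<Rightarrow> real) \<Rightarrow> bool" where
  "tends_to_infinity f \<longleftrightarrow> (\<forall>n::nat. finite {x. f x \<le> real n})"

(* The continuous-time chain started at x, described on a probability space M
   by its embedded jump chain xi (xi n = \<tilde>\<xi>_n) and holding times sigma
   (sigma (Suc k) = \<sigma>_{k+1}, the holding time in state \<tilde>\<xi>_k). *)
definition ctmc_from :: "('a \<Rightarrow> 'a \<Rightarrow> real) \<Rightarrow> 'a \<Rightarrow> 'w measure
      \<Rightarrow> (nat \<Rightarrow> 'w \<Rightarrow> 'a) \<Rightarrow> (nat \<Rightarrow> 'w \<Rightarrow> real) \<Rightarrow> bool" where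
  "ctmc_from \<Gamma> x M \<xi> \<sigma> \<longleftrightarrow>
     prob_space M \<and>
     (\<forall>n. \<xi> n \<in> measurable M (count_space UNIV)) \<and>
     (\<forall>n. \<sigma> n \<in> borel_measurable M) \<and>
     (\<forall>(n::nat) (xs :: nat \<Rightarrow> 'a) (ts :: nat \<Rightarrow> real). (\<forall>k<n. 0 \<le> ts k) \<longrightarrow>
        measure M {\<omega> \<in> space M. (\<forall>k\<le>n. \<xi> k \<omega> = xs k) \<and> (\<forall>k<n. ts k < \<sigma> (Suc k) \<omega>)}
        = (if xs 0 = x then 1 else 0) *
          (\<Prod>k<n. jump_matrix \<Gamma> (xs k) (xs (Suc k)) * exp (- total_rate \<Gamma> (xs k) * ts k)))"

(* explosion time zeta = lim J_n = sum of all holding times (value \<infinity> allowed) *)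
definition explosion_time :: "(nat \<Rightarrow> 'w \<Rightarrow> real) \<Rightarrow> 'w \<Rightarrow> ennreal" where
  "explosion_time \<sigma> \<omega> = (\<Sum>n. ennreal (\<sigma> (Suc n) \<omega>))"

end

theory Submission
  imports Defs
begin

text \<open>
  Fix thresholds \<open>T y = min 1 (1 / \<gamma> y)\<close> and discount the \<open>k\<close>-th holding time \<open>\<sigma>\<close> by the
  factor \<open>exp (- T)\<close> (with \<open>T\<close> taken at the \<open>k\<close>-th state) once \<open>\<sigma> > T\<close>. The product \<open>Z n\<close> of
  the first \<open>n\<close> factors is at least \<open>exp (- \<zeta>)\<close>, and averaging over the exponential holding
  times and the jump chain gives \<open>E (Z n) = u n x\<close>, where \<open>u 0 = 1\<close>,
  \<open>u (n + 1) = (1 - \<psi>) \<cdot> P (u n)\<close> and \<open>\<psi> = (1 - exp (- T)) exp (- \<gamma> T) \<ge> exp (-2) min 1 (1 / \<gamma>)\<close>.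
  Hence \<open>Pr (\<zeta> \<le> R) \<le> exp R \<cdot> u n x\<close>.

  The \<open>u n\<close> decrease to a solution \<open>v \<in> [0, 1]\<close> of \<open>v = (1 - \<psi>) \<cdot> P v\<close>. Concavity of
  \<open>G\<close> and the drift condition give \<open>P (G \<circ> f) \<le> G \<circ> f + 1 / \<gamma>\<close>, while \<open>G \<circ> f \<rightarrow> \<infinity>\<close>;
  evaluating the fixed-point equation at a maximum of \<open>v - \<epsilon> \<cdot> G \<circ> f\<close> yields
  \<open>sup v \<le> (1 - exp (-2)) sup v\<close>, so \<open>v = 0\<close> and \<open>\<zeta> = \<infinity>\<close> almost surely.
\<close>

section \<open>Iterating a Markov kernel\<close>

lemma nn_integral_count_space_infsum:
  fixes u :: "'b \<Rightarrow> real"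
  assumes "u summable_on A" "\<And>x. x \<in> A \<Longrightarrow> 0 \<le> u x"
  shows "(\<integral>\<^sup>+x. ennreal (u x) \<partial>count_space A) = ennreal (infsum u A)"
proof -
  have abs: "Infinite_Set_Sum.abs_summable_on u A"
    using assms abs_summable_equivalent summable_on_iff_abs_summable_on_real by blast
  then have "(\<integral>\<^sup>+x. ennreal (u x) \<partial>count_space A) = ennreal (infsetsum u A)"
    using assms nn_integral_conv_infsetsum by blast
  also have "infsetsum u A = infsum u A"
    using abs infsetsum_infsum abs_summable_equivalent by blast
  finally show ?thesis .
qed

lemma integrable_measure_pmf_bounded:
  fixes u :: "'b \<Rightarrow> real"
  assumes "\<And>y. \<bar>u y\<bar> \<le> B"
  shows "integrable (measure_pmf p) u"
  by (rule measure_pmf.integrable_const_bound[where B = B]) (use assms in auto)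

primrec kernel_paths :: "('a \<Rightarrow> 'a pmf) \<Rightarrow> 'a \<Rightarrow> nat \<Rightarrow> 'a list pmf" where
  "kernel_paths K x 0 = return_pmf [x]"
| "kernel_paths K x (Suc n) = K x \<bind> (\<lambda>y. map_pmf (Cons x) (kernel_paths K y n))"

lemma pmf_kernel_paths:
  "pmf (kernel_paths K x n) l =
     (if length l = Suc n \<and> l ! 0 = x then \<Prod>k<n. pmf (K (l ! k)) (l ! Suc k) else 0)"
proof (induction n arbitrary: x l)
  case 0
  show ?case by (cases l) (auto simp: length_Suc_conv)
next
  case (Suc n)
  show ?case
  proof (cases "\<exists>l'. l = x # l'")
    case False
    then have "Cons x -` {l} = {}" by auto
    with False show ?thesis by (cases l) (auto simp: pmf_bind pmf_map)
  next
    case True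
    then obtain l' where l: "l = x # l'" by blast
    have "pmf (kernel_paths K x (Suc n)) l = (\<integral>y. pmf (kernel_paths K y n) l' \<partial>K x)"
      by (simp add: l pmf_bind pmf_map_inj' inj_on_def)
    also have "\<dots> = (\<integral>y. (if y = l' ! 0 then pmf (kernel_paths K (l' ! 0) n) l' else 0) \<partial>K x)"
      by (rule Bochner_Integration.integral_cong) (auto simp: Suc.IH)
    also have "\<dots> = pmf (K x) (l' ! 0) * pmf (kernel_paths K (l' ! 0) n) l'"
      by (subst integral_measure_pmf[of "{l' ! 0}"]) (auto split: if_splits)
    finally show ?thesis
      by (simp add: l Suc.IH prod.lessThan_Suc_shift del: prod.lessThan_Suc)
  qed
qed

primrec kernel_iterate :: "('a \<Rightarrow> 'a pmf) \<Rightarrow> ('a \<Rightarrow> real) \<Rightarrow> nat \<Rightarrow> 'a \<Rightarrow> real" where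
  "kernel_iterate K \<phi> 0 x = 1"
| "kernel_iterate K \<phi> (Suc n) x = \<phi> x * (\<integral>y. kernel_iterate K \<phi> n y \<partial>K x)"

lemma kernel_iterate_const_1 [simp]: "kernel_iterate K (\<lambda>_. 1) n x = 1"
  by (induction n arbitrary: x) simp_all

context
  fixes K :: "'a \<Rightarrow> 'a pmf" and \<phi> :: "'a \<Rightarrow> real"
  assumes \<phi>_nonneg: "\<And>y. 0 \<le> \<phi> y" and \<phi>_le_1: "\<And>y. \<phi> y \<le> 1"
begin

lemma kernel_iterate_bounds: "0 \<le> kernel_iterate K \<phi> n x \<and> kernel_iterate K \<phi> n x \<le> 1"
proof (induction n arbitrary: x)
  case 0
  show ?case by simp
next
  case (Suc n)
  have "(\<integral>y. kernel_iterate K \<phi> n y \<partial>K x) \<le> (\<integral>y. 1 \<partial>K x)"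
    by (rule integral_mono) (use Suc in \<open>auto intro: integrable_measure_pmf_bounded[where B = 1]\<close>)
  moreover have "0 \<le> (\<integral>y. kernel_iterate K \<phi> n y \<partial>K x)"
    by (rule integral_nonneg_AE) (use Suc in auto)
  ultimately show ?case using \<phi>_nonneg[of x] \<phi>_le_1[of x] by (auto intro: mult_le_one)
qed

lemma integrable_kernel_iterate: "integrable (K x) (kernel_iterate K \<phi> n)"
  by (rule integrable_measure_pmf_bounded[where B = 1]) (use kernel_iterate_bounds in auto)

lemma kernel_iterate_eq_nn_integral_paths:
  "ennreal (kernel_iterate K \<phi> n x) = (\<integral>\<^sup>+l. ennreal (\<Prod>k<n. \<phi> (l ! k)) \<partial>kernel_paths K x n)"
proof (induction n arbitrary: x)
  case 0
  show ?case by simp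
next
  case (Suc n)
  have split: "(\<Prod>k<Suc n. \<phi> ((x # l) ! k)) = \<phi> x * (\<Prod>k<n. \<phi> (l ! k))" for l
    by (simp add: prod.lessThan_Suc_shift del: prod.lessThan_Suc)
  have "(\<integral>\<^sup>+l. ennreal (\<Prod>k<Suc n. \<phi> (l ! k)) \<partial>kernel_paths K x (Suc n))
      = (\<integral>\<^sup>+y. ennreal (\<phi> x) * (\<integral>\<^sup>+l. ennreal (\<Prod>k<n. \<phi> (l ! k)) \<partial>kernel_paths K y n) \<partial>K x)"
    by (simp add: split ennreal_mult' \<phi>_nonneg prod_nonneg nn_integral_cmult del: prod.lessThan_Suc)
  also have "\<dots> = ennreal (\<phi> x) * (\<integral>\<^sup>+y. ennreal (kernel_iterate K \<phi> n y) \<partial>K x)"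
    by (simp add: Suc.IH nn_integral_cmult)
  also have "(\<integral>\<^sup>+y. ennreal (kernel_iterate K \<phi> n y) \<partial>K x) = ennreal (\<integral>y. kernel_iterate K \<phi> n y \<partial>K x)"
    by (rule nn_integral_eq_integral[OF integrable_kernel_iterate]) (use kernel_iterate_bounds in auto)
  finally show ?case by (simp add: ennreal_mult' \<phi>_nonneg)
qed

lemma kernel_iterate_Suc_le: "kernel_iterate K \<phi> (Suc n) x \<le> kernel_iterate K \<phi> n x"
proof (induction n arbitrary: x)
  case 0
  show ?case using \<phi>_le_1 by simp
next
  case (Suc n)
  have "(\<integral>y. kernel_iterate K \<phi> (Suc n) y \<partial>K x) \<le> (\<integral>y. kernel_iterate K \<phi> n y \<partial>K x)"
    by (rule integral_mono[OF integrable_kernel_iterate integrable_kernel_iterate]) (rule Suc.IH)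
  then show ?case using \<phi>_nonneg[of x] unfolding kernel_iterate.simps(2) by (rule mult_left_mono)
qed

lemma kernel_iterate_limit:
  obtains v where "\<And>y. (\<lambda>n. kernel_iterate K \<phi> n y) \<longlonglongrightarrow> v y"
    and "\<And>y. 0 \<le> v y \<and> v y \<le> 1" and "\<And>y. v y = \<phi> y * (\<integral>z. v z \<partial>K y)"
proof -
  have "\<exists>L. (\<lambda>n. kernel_iterate K \<phi> n y) \<longlonglongrightarrow> L" for y
  proof -
    have "decseq (\<lambda>n. kernel_iterate K \<phi> n y)"
      by (rule decseq_SucI) (rule kernel_iterate_Suc_le)
    moreover have "\<forall>n. 0 \<le> kernel_iterate K \<phi> n y" using kernel_iterate_bounds by blast
    ultimately obtain L where "(\<lambda>n. kernel_iterate K \<phi> n y) \<longlonglongrightarrow> L"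
      by (rule decseq_convergent)
    then show ?thesis ..
  qed
  then obtain v where lim: "\<And>y. (\<lambda>n. kernel_iterate K \<phi> n y) \<longlonglongrightarrow> v y" by metis
  have bounds: "0 \<le> v y \<and> v y \<le> 1" for y
  proof
    show "0 \<le> v y" by (rule LIMSEQ_le_const[OF lim]) (use kernel_iterate_bounds in blast)
    show "v y \<le> 1" by (rule LIMSEQ_le_const2[OF lim]) (use kernel_iterate_bounds in blast)
  qed
  have "v y = \<phi> y * (\<integral>z. v z \<partial>K y)" for y
  proof -
    have "(\<lambda>n. \<integral>z. kernel_iterate K \<phi> n z \<partial>K y) \<longlonglongrightarrow> (\<integral>z. v z \<partial>K y)"
      by (rule integral_dominated_convergence[where w = "\<lambda>_. 1"])
        (use lim kernel_iterate_bounds in auto)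
    then have "(\<lambda>n. kernel_iterate K \<phi> (Suc n) y) \<longlonglongrightarrow> \<phi> y * (\<integral>z. v z \<partial>K y)"
      by (simp add: tendsto_mult_left)
    with LIMSEQ_Suc[OF lim] show ?thesis by (rule LIMSEQ_unique)
  qed
  with lim bounds that show ?thesis by blast
qed

end

section \<open>A maximum principle for kernel fixed points\<close>

lemma finite_superlevel_has_max:
  fixes u :: "'a \<Rightarrow> real"
  assumes "finite {y. c \<le> u y}" and "c \<le> u y\<^sub>0"
  obtains z where "\<And>y. u y \<le> u z"
proof -
  let ?S = "{y. c \<le> u y}"
  have "Max (u ` ?S) \<in> u ` ?S" using assms by (intro Max_in) auto
  then obtain z where z: "z \<in> ?S" "u z = Max (u ` ?S)" by auto
  have "u y \<le> u z" for y
  proof (cases "y \<in> ?S")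
    case True
    then show ?thesis using z assms(1) by simp
  next
    case False
    then show ?thesis using z by simp
  qed
  then show ?thesis by (rule that)
qed

context
  fixes K :: "'a \<Rightarrow> 'a pmf" and v \<psi> b h :: "'a \<Rightarrow> real" and c :: real
  assumes v_bounds: "\<And>y. 0 \<le> v y \<and> v y \<le> 1"
    and v_fixpoint: "\<And>y. v y = (1 - \<psi> y) * (\<integral>z. v z \<partial>K y)"
    and c_pos: "0 < c" and c_le_1: "c \<le> 1"
    and \<psi>_lower: "\<And>y. c * min 1 (b y) \<le> \<psi> y"
    and b_pos: "\<And>y. 0 < b y"
    and h_nonneg: "\<And>y. 0 \<le> h y"
    and h_finite_sublevel: "\<And>C. finite {y. h y \<le> C}"
    and h_integrable: "\<And>y. integrable (K y) h"
    and h_drift: "\<And>y. (\<integral>z. h z \<partial>K y) \<le> h y + b y"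
begin

private lemma integrable_v: "integrable (K y) v"
  by (rule integrable_measure_pmf_bounded[where B = 1]) (use v_bounds in auto)

private lemma integral_v_bounds: "0 \<le> (\<integral>z. v z \<partial>K y) \<and> (\<integral>z. v z \<partial>K y) \<le> Sup (range v)"
proof
  show "0 \<le> (\<integral>z. v z \<partial>K y)" by (rule integral_nonneg_AE) (use v_bounds in auto)
  have "bdd_above (range v)" using v_bounds by (auto intro: bdd_aboveI[where M = 1])
  then have "(\<integral>z. v z \<partial>K y) \<le> (\<integral>z. Sup (range v) \<partial>K y)"
    by (intro integral_mono integrable_v) (auto intro: cSUP_upper)
  then show "(\<integral>z. v z \<partial>K y) \<le> Sup (range v)" by simp
qed

text \<open>At a maximum of \<open>v - \<epsilon> h\<close> the drift bound gives \<open>K v z \<le> v z + \<epsilon> b z\<close>; combined with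
  the fixed-point equation this forces \<open>v z\<close> to be small where \<open>\<psi> z \<ge> c b z\<close>, and at most
  a fraction \<open>1 - c\<close> of \<open>sup v\<close> where \<open>\<psi> z \<ge> c\<close>.\<close>

private lemma v_at_max_le:
  assumes \<epsilon>: "0 < \<epsilon>" and max: "\<And>y. v y - \<epsilon> * h y \<le> v z - \<epsilon> * h z"
  shows "v z \<le> max (\<epsilon> / c) ((1 - c) * Sup (range v))"
proof -
  let ?I = "\<integral>y. v y \<partial>K z"
  have "?I \<le> (\<integral>y. v z - \<epsilon> * h z + \<epsilon> * h y \<partial>K z)"
    by (rule integral_mono) (use integrable_v h_integrable max in \<open>auto simp: algebra_simps\<close>)
  also have "\<dots> = v z - \<epsilon> * h z + \<epsilon> * (\<integral>y. h y \<partial>K z)"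
    using h_integrable by simp
  also have "\<dots> \<le> v z + \<epsilon> * b z"
    using mult_left_mono[OF h_drift[of z], of \<epsilon>] \<epsilon> by (simp add: algebra_simps)
  finally have I_le: "?I \<le> v z + \<epsilon> * b z" .
  have I_bounds: "0 \<le> ?I" "?I \<le> Sup (range v)" using integral_v_bounds by auto
  show ?thesis
  proof (cases "1 \<le> b z")
    case True
    then have "c \<le> \<psi> z" using \<psi>_lower[of z] by simp
    then have "v z \<le> (1 - c) * ?I"
      by (subst v_fixpoint) (use I_bounds in \<open>intro mult_right_mono, auto\<close>)
    also have "\<dots> \<le> (1 - c) * Sup (range v)" using c_le_1 I_bounds by (intro mult_left_mono) auto
    finally show ?thesis by simp
  next
    case False
    then have cb: "c * b z \<le> \<psi> z" using \<psi>_lower[of z] by simp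
    have "\<psi> z * ?I \<le> \<epsilon> * b z" using I_le v_fixpoint[of z] by (simp add: algebra_simps)
    moreover have "c * b z * ?I \<le> \<psi> z * ?I" using cb I_bounds by (intro mult_right_mono)
    ultimately have "b z * (c * ?I) \<le> b z * \<epsilon>" by (simp add: algebra_simps)
    then have "?I \<le> \<epsilon> / c" using b_pos[of z] c_pos by (simp add: le_divide_eq mult.commute)
    moreover have "v z \<le> ?I"
    proof -
      have "0 \<le> c * min 1 (b z)" using c_pos b_pos[of z] by simp
      then have "0 \<le> \<psi> z * ?I" using \<psi>_lower[of z] I_bounds by simp
      then show ?thesis using v_fixpoint[of z] by (simp add: algebra_simps)
    qed
    ultimately show ?thesis by simp
  qed
qed

private lemma v_le_Lyapunov_shift:
  assumes \<epsilon>: "0 < \<epsilon>"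
  shows "v x \<le> \<epsilon> * h x + max (\<epsilon> / c) ((1 - c) * Sup (range v))"
proof (cases "\<exists>y. 0 \<le> v y - \<epsilon> * h y")
  case False
  then have "v x \<le> \<epsilon> * h x" by (simp add: not_le less_imp_le)
  moreover have "0 \<le> \<epsilon> / c" using \<epsilon> c_pos by simp
  ultimately show ?thesis by (simp add: le_max_iff_disj)
next
  case True
  then obtain y\<^sub>0 where y\<^sub>0: "0 \<le> v y\<^sub>0 - \<epsilon> * h y\<^sub>0" ..
  have "{y. 0 \<le> v y - \<epsilon> * h y} \<subseteq> {y. h y \<le> 1 / \<epsilon>}"
    using v_bounds \<epsilon> by (auto simp: field_simps intro: order.trans)
  then have "finite {y. 0 \<le> v y - \<epsilon> * h y}" using h_finite_sublevel by (rule finite_subset)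
  from finite_superlevel_has_max[OF this y\<^sub>0]
  obtain z where max: "\<And>y. v y - \<epsilon> * h y \<le> v z - \<epsilon> * h z" by blast
  have "v x \<le> v z - \<epsilon> * h z + \<epsilon> * h x" using max[of x] by simp
  also have "\<dots> \<le> v z + \<epsilon> * h x" using h_nonneg[of z] \<epsilon> by simp
  finally show ?thesis using v_at_max_le[OF \<epsilon> max] by simp
qed

lemma kernel_fixpoint_eq_0: "v x = 0"
proof -
  let ?S = "Sup (range v)"
  have S_nonneg: "0 \<le> ?S"
    using v_bounds by (meson bdd_aboveI2 cSUP_upper2 UNIV_I)
  have "v y \<le> (1 - c) * ?S" for y
  proof (rule field_le_epsilon)
    fix e :: real assume e: "0 < e"
    define d where "d = h y + 1 / c"
    have d: "0 < d" unfolding d_def using h_nonneg[of y] c_pos by (simp add: add_nonneg_pos)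
    have "v y \<le> e / d * h y + max (e / d / c) ((1 - c) * ?S)"
      using e d by (intro v_le_Lyapunov_shift) simp
    also have "\<dots> \<le> e / d * h y + e / d / c + (1 - c) * ?S"
      using e d c_pos c_le_1 S_nonneg by (auto simp: max_def)
    also have "e / d * h y + e / d / c = e / d * d"
      unfolding d_def by (simp add: ring_distribs)
    also have "\<dots> = e" using d by simp
    finally show "v y \<le> (1 - c) * ?S + e" by simp
  qed
  then have "?S \<le> (1 - c) * ?S" by (intro cSUP_least) auto
  then have "?S \<le> 0" using c_pos S_nonneg by (simp add: algebra_simps mult_le_0_iff)
  moreover have "v x \<le> ?S"
    using v_bounds by (intro cSUP_upper bdd_aboveI[where M = 1]) auto
  ultimately show ?thesis using v_bounds[of x] by linarith
qed

end

section \<open>The time change \<open>G = \<integral> 1/g\<close>\<close>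

lemma inverse_ennreal_le_divide: "0 < x \<Longrightarrow> x \<le> y \<Longrightarrow> inverse (ennreal y) \<le> ennreal (1 / x)"
  by (simp add: inverse_ennreal ennreal_leI frac_le flip: inverse_eq_divide)

lemma divide_le_inverse_ennreal: "0 < y \<Longrightarrow> y \<le> x \<Longrightarrow> ennreal (1 / x) \<le> inverse (ennreal y)"
  by (simp add: inverse_ennreal ennreal_leI frac_le flip: inverse_eq_divide)

lemma nn_integral_const_Ioc:
  "0 \<le> c \<Longrightarrow> a \<le> b \<Longrightarrow> (\<integral>\<^sup>+y. ennreal c * indicator {a<..b} y \<partial>lborel) = ennreal (c * (b - a))"
  by (simp add: nn_integral_cmult_indicator ennreal_mult)

locale time_change =
  fixes g :: "real \<Rightarrow> real"
  assumes g_mono: "mono_on {0..} g" and g_nonneg: "\<forall>y\<ge>0. 0 \<le> g y"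
    and G_finite: "\<forall>z\<ge>0. set_nn_integral lborel {0..z} (\<lambda>y. inverse (ennreal (g y))) < \<infinity>"
begin

definition G :: "real \<Rightarrow> real" where
  "G z = enn2real (\<integral>\<^sup>+y\<in>{0..z}. inverse (ennreal (g y)) \<partial>lborel)"

lemma G_nonneg: "0 \<le> G z"
  by (simp add: G_def)

lemma ennreal_G: "0 \<le> z \<Longrightarrow> ennreal (G z) = (\<integral>\<^sup>+y\<in>{0..z}. inverse (ennreal (g y)) \<partial>lborel)"
  using G_finite by (simp add: G_def less_top[symmetric])

lemma g_pos:
  assumes "0 < a"
  shows "0 < g a"
proof (rule ccontr)
  assume "\<not> 0 < g a"
  then have "g y = 0" if "y \<in> {0..a}" for y
    using mono_onD[OF g_mono, of y a] that g_nonneg by force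
  then have "(\<integral>\<^sup>+y\<in>{0..a}. inverse (ennreal (g y)) \<partial>lborel) = (\<integral>\<^sup>+y. \<infinity> * indicator {0..a} y \<partial>lborel)"
    by (intro nn_integral_cong) (auto simp: indicator_def)
  also have "\<dots> = \<infinity>" using assms by (simp add: nn_integral_cmult_indicator ennreal_mult_top)
  finally show False using G_finite assms by (metis less_eq_real_def less_irrefl)
qed

lemma G_add_Ioc:
  assumes "0 \<le> a" "a \<le> b"
  shows "ennreal (G b) = ennreal (G a) + (\<integral>\<^sup>+y\<in>{a<..b}. inverse (ennreal (g y)) \<partial>lborel)"
proof -
  \<comment> \<open>\<open>g\<close> is only monotone on \<open>[0, \<infinity>)\<close>; its monotone extension \<open>g \<circ> max 0\<close> is Borel.\<close>
  let ?g = "\<lambda>y. g (max 0 y)"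
  have "mono ?g" by (auto simp: mono_def intro!: mono_onD[OF g_mono])
  then have [measurable]: "?g \<in> borel_measurable borel" by (rule borel_measurable_mono)
  have restrict: "(\<integral>\<^sup>+y\<in>A. inverse (ennreal (g y)) \<partial>lborel) = (\<integral>\<^sup>+y\<in>A. inverse (ennreal (?g y)) \<partial>lborel)"
    if "A \<subseteq> {0..}" for A
    using that by (intro nn_integral_cong) (auto simp: indicator_def max_def)
  have "ennreal (G b) = (\<integral>\<^sup>+y\<in>{0..b}. inverse (ennreal (?g y)) \<partial>lborel)"
    using assms by (simp add: ennreal_G restrict)
  also have "\<dots> = (\<integral>\<^sup>+y. inverse (ennreal (?g y)) * indicator {0..a} y
                  + inverse (ennreal (?g y)) * indicator {a<..b} y \<partial>lborel)"
    using assms by (intro nn_integral_cong) (auto simp: indicator_def)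
  also have "\<dots> = (\<integral>\<^sup>+y\<in>{0..a}. inverse (ennreal (?g y)) \<partial>lborel)
                  + (\<integral>\<^sup>+y\<in>{a<..b}. inverse (ennreal (?g y)) \<partial>lborel)"
    by (rule nn_integral_add) auto
  also have "\<dots> = ennreal (G a) + (\<integral>\<^sup>+y\<in>{a<..b}. inverse (ennreal (g y)) \<partial>lborel)"
    using assms restrict[of "{a<..b}"] by (simp add: ennreal_G restrict[of "{0..a}"] subset_eq)
  finally show ?thesis .
qed

lemma G_diff_le:
  assumes "0 \<le> a" "a \<le> b" "0 < g a"
  shows "G b - G a \<le> (b - a) / g a"
proof -
  have "(\<integral>\<^sup>+y\<in>{a<..b}. inverse (ennreal (g y)) \<partial>lborel) \<le> (\<integral>\<^sup>+y. ennreal (1 / g a) * indicator {a<..b} y \<partial>lborel)"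
  proof (intro nn_integral_mono)
    fix y
    have "inverse (ennreal (g y)) \<le> ennreal (1 / g a)" if "y \<in> {a<..b}"
      using that assms mono_onD[OF g_mono, of a y] by (intro inverse_ennreal_le_divide) auto
    then show "inverse (ennreal (g y)) * indicator {a<..b} y \<le> ennreal (1 / g a) * indicator {a<..b} y"
      by (simp add: indicator_def)
  qed
  also have "\<dots> = ennreal ((b - a) / g a)"
    using assms by (simp add: nn_integral_const_Ioc)
  finally have "ennreal (G b) \<le> ennreal (G a) + ennreal ((b - a) / g a)"
    unfolding G_add_Ioc[OF assms(1,2)] by (rule add_left_mono)
  also have "\<dots> = ennreal (G a + (b - a) / g a)"
    using assms G_nonneg[of a] by (intro ennreal_plus[symmetric]) auto
  finally have "G b \<le> G a + (b - a) / g a"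
    using assms G_nonneg[of a] by (subst (asm) ennreal_le_iff) simp_all
  then show ?thesis by simp
qed

lemma G_diff_ge:
  assumes "0 \<le> a" "a \<le> b" "0 < g b"
  shows "(b - a) / g b \<le> G b - G a"
proof -
  have "ennreal ((b - a) / g b) = (\<integral>\<^sup>+y. ennreal (1 / g b) * indicator {a<..b} y \<partial>lborel)"
    using assms by (subst nn_integral_const_Ioc) auto
  also have "\<dots> \<le> (\<integral>\<^sup>+y\<in>{a<..b}. inverse (ennreal (g y)) \<partial>lborel)"
  proof (intro nn_integral_mono)
    fix y
    show "ennreal (1 / g b) * indicator {a<..b} y \<le> inverse (ennreal (g y)) * indicator {a<..b} y"
    proof (cases "y \<in> {a<..b} \<and> g y \<noteq> 0")
      case True
      then have y: "0 \<le> y" "y \<le> b" using assms by auto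
      then have "0 < g y" using True g_nonneg by (simp add: order_less_le)
      moreover have "g y \<le> g b" using mono_onD[OF g_mono] y assms by simp
      ultimately have "ennreal (1 / g b) \<le> inverse (ennreal (g y))"
        by (rule divide_le_inverse_ennreal)
      then show ?thesis using True by simp
    qed (auto simp: indicator_def)
  qed
  finally have "ennreal (G a) + ennreal ((b - a) / g b) \<le> ennreal (G b)"
    unfolding G_add_Ioc[OF assms(1,2)] by (rule add_left_mono)
  also have "ennreal (G a) + ennreal ((b - a) / g b) = ennreal (G a + (b - a) / g b)"
    using assms G_nonneg[of a] by (intro ennreal_plus[symmetric]) auto
  finally have "G a + (b - a) / g b \<le> G b"
    using G_nonneg[of b] by (rule ennreal_le_iff[THEN iffD1, rotated])
  then show ?thesis by simp
qed

lemma G_le_tangent: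
  assumes "0 \<le> a" "0 \<le> b" "0 < g a"
  shows "G b \<le> G a + (b - a) / g a"
proof (cases "a \<le> b")
  case True
  with G_diff_le[OF assms(1) True assms(3)] show ?thesis by simp
next
  case False
  with G_diff_ge[OF assms(2) _ assms(3)] show ?thesis by (simp add: diff_divide_distrib)
qed

end

section \<open>The embedded jump chain\<close>

locale jump_generator =
  fixes \<Gamma> :: "'a::countable \<Rightarrow> 'a \<Rightarrow> real"
  assumes generator: "is_generator \<Gamma>"
begin

lemma total_rate_pos: "0 < total_rate \<Gamma> x"
  using generator unfolding is_generator_def by blast

lemma diagonal_eq_neg_total_rate: "\<Gamma> x x = - total_rate \<Gamma> x"
  using generator unfolding is_generator_def by blast

lemma jump_matrix_nonneg: "0 \<le> jump_matrix \<Gamma> x y"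
  using generator total_rate_pos[of x] unfolding is_generator_def jump_matrix_def
  by (auto intro: divide_nonneg_pos)

lemma jump_matrix_mult_eq:
  "y \<in> UNIV - {x} \<Longrightarrow> jump_matrix \<Gamma> x y * u y = \<Gamma> x y * u y * inverse (total_rate \<Gamma> x)"
  by (simp add: jump_matrix_def divide_inverse)

lemma jump_matrix_summable_iff:
  "(\<lambda>y. jump_matrix \<Gamma> x y * u y) summable_on UNIV \<longleftrightarrow> (\<lambda>y. \<Gamma> x y * u y) summable_on (UNIV - {x})"
proof -
  have "(\<lambda>y. jump_matrix \<Gamma> x y * u y) summable_on UNIV \<longleftrightarrow>
        (\<lambda>y. jump_matrix \<Gamma> x y * u y) summable_on (UNIV - {x})"
    using summable_on_insert_iff[of _ x "UNIV - {x}"] by (simp add: insert_absorb)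
  also have "\<dots> \<longleftrightarrow> (\<lambda>y. \<Gamma> x y * u y * inverse (total_rate \<Gamma> x)) summable_on (UNIV - {x})"
    by (rule summable_on_cong) (rule jump_matrix_mult_eq)
  also have "\<dots> \<longleftrightarrow> (\<lambda>y. \<Gamma> x y * u y) summable_on (UNIV - {x})"
    using total_rate_pos[of x] by (intro summable_on_cmult_left') simp
  finally show ?thesis .
qed

lemma infsum_jump_matrix:
  "infsum (\<lambda>y. jump_matrix \<Gamma> x y * u y) UNIV = infsum (\<lambda>y. \<Gamma> x y * u y) (UNIV - {x}) / total_rate \<Gamma> x"
proof -
  have "infsum (\<lambda>y. jump_matrix \<Gamma> x y * u y) UNIV = infsum (\<lambda>y. jump_matrix \<Gamma> x y * u y) (UNIV - {x})"
    by (rule infsum_cong_neutral) (auto simp: jump_matrix_def)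
  also have "\<dots> = infsum (\<lambda>y. \<Gamma> x y * u y * inverse (total_rate \<Gamma> x)) (UNIV - {x})"
    by (rule infsum_cong) (rule jump_matrix_mult_eq)
  finally show ?thesis by (simp add: infsum_cmult_left' divide_inverse)
qed

lemma nn_integral_jump_matrix: "(\<integral>\<^sup>+y. ennreal (jump_matrix \<Gamma> x y) \<partial>count_space UNIV) = 1"
proof -
  have "(\<lambda>y. \<Gamma> x y * 1) summable_on (UNIV - {x})"
    using generator unfolding is_generator_def by simp
  then have "jump_matrix \<Gamma> x summable_on UNIV"
    using jump_matrix_summable_iff[of x "\<lambda>_. 1"] by simp
  moreover have "infsum (jump_matrix \<Gamma> x) UNIV = 1"
    using infsum_jump_matrix[of x "\<lambda>_. 1"] total_rate_pos[of x] by (simp add: total_rate_def)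
  ultimately show ?thesis
    using jump_matrix_nonneg by (simp add: nn_integral_count_space_infsum)
qed

definition jump_kernel :: "'a \<Rightarrow> 'a pmf" where
  "jump_kernel x = embed_pmf (jump_matrix \<Gamma> x)"

lemma pmf_jump_kernel: "pmf (jump_kernel x) y = jump_matrix \<Gamma> x y"
  unfolding jump_kernel_def by (rule pmf_embed_pmf) (use jump_matrix_nonneg nn_integral_jump_matrix in auto)

context
  fixes f :: "'a \<Rightarrow> real"
  assumes f_dom: "in_Dom \<Gamma> f" and f_nonneg: "\<And>x. 0 \<le> f x"
begin

lemma summable_jump_matrix_mult: "(\<lambda>y. jump_matrix \<Gamma> x y * f y) summable_on UNIV"
  using f_dom f_nonneg by (simp add: jump_matrix_summable_iff in_Dom_def)

lemma nn_integral_jump_kernel: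
  "(\<integral>\<^sup>+y. ennreal (f y) \<partial>jump_kernel x) = ennreal (infsum (\<lambda>y. jump_matrix \<Gamma> x y * f y) UNIV)"
  unfolding nn_integral_measure_pmf pmf_jump_kernel
  using summable_jump_matrix_mult jump_matrix_nonneg f_nonneg
  by (simp add: ennreal_mult'[symmetric] nn_integral_count_space_infsum)

lemma integrable_jump_kernel: "integrable (jump_kernel x) f"
  using nn_integral_jump_kernel f_nonneg by (intro integrableI_nn_integral_finite) auto

lemma integral_jump_kernel: "(\<integral>y. f y \<partial>jump_kernel x) = f x + gen_apply \<Gamma> f x / total_rate \<Gamma> x"
proof -
  let ?S = "infsum (\<lambda>y. \<Gamma> x y * f y) (UNIV - {x})"
  have "(\<lambda>y. \<Gamma> x y * f y) summable_on (UNIV - {x})"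
    using f_dom f_nonneg by (simp add: in_Dom_def)
  from infsum_insert[OF this, of x] have gen: "gen_apply \<Gamma> f x = \<Gamma> x x * f x + ?S"
    by (simp add: gen_apply_def)
  have "0 \<le> ?S"
    by (rule infsum_nonneg) (use generator f_nonneg in \<open>auto simp: is_generator_def\<close>)
  then have "(\<integral>y. f y \<partial>jump_kernel x) = ?S / total_rate \<Gamma> x"
    using nn_integral_jump_kernel f_nonneg total_rate_pos[of x]
    by (subst integral_eq_nn_integral) (auto simp: infsum_jump_matrix)
  with gen show ?thesis
    using total_rate_pos[of x] by (simp add: diagonal_eq_neg_total_rate field_simps)
qed

end

end

section \<open>The Lyapunov function \<open>G \<circ> f\<close>\<close>

locale drift_condition = jump_generator \<Gamma> + time_change g
  for \<Gamma> :: "'a::countable \<Rightarrow> 'a \<Rightarrow> real" and g +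
  fixes f :: "'a \<Rightarrow> real"
  assumes f_dom: "in_Dom \<Gamma> f" and f_nonneg: "\<forall>x. 0 \<le> f x" and f_inf: "tends_to_infinity f"
    and G_lim: "((\<lambda>z. set_nn_integral lborel {0..z} (\<lambda>y. inverse (ennreal (g y)))) \<longlongrightarrow> \<infinity>) at_top"
    and drift: "\<forall>x. gen_apply \<Gamma> f x \<le> g (f x)"
begin

lemma integrable_f: "integrable (jump_kernel x) f"
  using f_dom f_nonneg by (intro integrable_jump_kernel) auto

lemma integral_f: "(\<integral>y. f y \<partial>jump_kernel x) = f x + gen_apply \<Gamma> f x / total_rate \<Gamma> x"
  using f_dom f_nonneg by (intro integral_jump_kernel) auto

lemma integrable_G_f: "integrable (jump_kernel x) (\<lambda>y. G (f y))"
proof (rule Bochner_Integration.integrable_bound)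
  have g1: "0 < g 1" by (rule g_pos) simp
  show "integrable (jump_kernel x) (\<lambda>y. G 1 + (f y + 1) / g 1)"
    using integrable_f by simp
  show "AE y in jump_kernel x. norm (G (f y)) \<le> norm (G 1 + (f y + 1) / g 1)"
  proof (rule AE_I2)
    fix y
    have "G (f y) \<le> G 1 + (f y - 1) / g 1"
      using f_nonneg g1 by (intro G_le_tangent) auto
    also have "\<dots> \<le> G 1 + (f y + 1) / g 1" using g1 by (simp add: divide_right_mono)
    finally show "norm (G (f y)) \<le> norm (G 1 + (f y + 1) / g 1)"
      using G_nonneg[of "f y"] by simp
  qed
qed simp

text \<open>Tangent-line bound for the concave \<open>G\<close> (its derivative \<open>1/g\<close> decreases) at \<open>f x\<close>,
  combined with \<open>\<Gamma>f \<le> g \<circ> f\<close>.\<close>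

lemma integral_G_f_le: "(\<integral>y. G (f y) \<partial>jump_kernel x) \<le> G (f x) + 1 / total_rate \<Gamma> x"
proof (cases "0 < g (f x)")
  case True
  let ?tangent = "\<lambda>y. G (f x) + (f y - f x) / g (f x)"
  have "(\<integral>y. G (f y) \<partial>jump_kernel x) \<le> (\<integral>y. ?tangent y \<partial>jump_kernel x)"
    using integrable_G_f integrable_f f_nonneg True by (intro integral_mono G_le_tangent) auto
  also have "\<dots> = G (f x) + (gen_apply \<Gamma> f x / total_rate \<Gamma> x) / g (f x)"
    using integrable_f by (simp add: integral_f diff_divide_distrib add_divide_distrib)
  also have "\<dots> \<le> G (f x) + (g (f x) / total_rate \<Gamma> x) / g (f x)"
    using drift total_rate_pos[of x] True by (intro add_left_mono divide_right_mono) auto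
  finally show ?thesis using True by simp
next
  case False
  then have fx: "f x = 0" using f_nonneg g_pos by (metis order_le_neq_trans)
  have "(\<integral>y. f y \<partial>jump_kernel x) \<le> 0"
    using integral_f drift[rule_format, of x] False fx total_rate_pos[of x]
    by (simp add: divide_nonpos_pos)
  moreover have "0 \<le> (\<integral>y. f y \<partial>jump_kernel x)"
    using f_nonneg by (simp add: integral_nonneg_AE)
  ultimately have "(\<integral>y. f y \<partial>jump_kernel x) = 0" by simp
  then have "AE y in jump_kernel x. f y = 0"
    by (subst (asm) integral_nonneg_eq_0_iff_AE[OF integrable_f]) (use f_nonneg in auto)
  then have "(\<integral>y. G (f y) \<partial>jump_kernel x) = (\<integral>y. G (f x) \<partial>jump_kernel x)"
    by (intro integral_cong_AE) (auto simp: fx elim: AE_mp)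
  then show ?thesis using total_rate_pos[of x] by simp
qed

lemma finite_sublevel_G_f: "finite {x. G (f x) \<le> C}"
proof -
  have "\<forall>\<^sub>F z in at_top. ennreal (max C 0) < (\<integral>\<^sup>+y\<in>{0..z}. inverse (ennreal (g y)) \<partial>lborel)"
    using G_lim by (rule order_tendstoD(1)) simp
  then obtain Z where Z: "\<And>z. Z \<le> z \<Longrightarrow> ennreal (max C 0) < (\<integral>\<^sup>+y\<in>{0..z}. inverse (ennreal (g y)) \<partial>lborel)"
    unfolding eventually_at_top_linorder by blast
  have "{x. G (f x) \<le> C} \<subseteq> {x. f x \<le> real (nat \<lceil>max Z 0\<rceil>)}"
  proof (intro subsetI CollectI)
    fix x assume "x \<in> {x. G (f x) \<le> C}"
    then have le: "ennreal (G (f x)) \<le> ennreal (max C 0)" by (simp add: ennreal_leI)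
    have "\<not> Z \<le> f x"
    proof
      assume "Z \<le> f x"
      then have "ennreal (max C 0) < ennreal (G (f x))" using Z f_nonneg by (simp add: ennreal_G)
      with le show False by simp
    qed
    then show "f x \<le> real (nat \<lceil>max Z 0\<rceil>)" by linarith
  qed
  moreover have "finite {x. f x \<le> real (nat \<lceil>max Z 0\<rceil>)}"
    using f_inf unfolding tends_to_infinity_def by blast
  ultimately show ?thesis by (rule finite_subset)
qed

end

section \<open>Decay of the discounted iterates\<close>

context jump_generator
begin

text \<open>\<open>discount_weight T y\<close> is the mean of \<open>(1 - exp (- T y)) \<cdot> 1{\<sigma> > T y}\<close> for a holding
  time \<open>\<sigma>\<close> distributed as \<open>Exp(\<gamma> y)\<close>.\<close>

definition discount_weight :: "('a \<Rightarrow> real) \<Rightarrow> 'a \<Rightarrow> real" where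
  "discount_weight T y = (1 - exp (- T y)) * exp (- total_rate \<Gamma> y * T y)"

lemma discount_weight_bounds:
  assumes "0 \<le> T y"
  shows "0 \<le> discount_weight T y \<and> discount_weight T y \<le> 1"
proof -
  have "0 \<le> 1 - exp (- T y)" "1 - exp (- T y) \<le> 1" using assms by auto
  moreover have "0 \<le> exp (- total_rate \<Gamma> y * T y)" "exp (- total_rate \<Gamma> y * T y) \<le> 1"
    using assms total_rate_pos[of y] by auto
  ultimately show ?thesis unfolding discount_weight_def by (simp add: mult_le_one)
qed

definition holding_threshold :: "'a \<Rightarrow> real" where
  "holding_threshold y = min 1 (1 / total_rate \<Gamma> y)"

lemma holding_threshold_pos: "0 < holding_threshold y"
  using total_rate_pos[of y] unfolding holding_threshold_def by simp

lemma discount_weight_holding_threshold_ge: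
  "exp (-2) * holding_threshold y \<le> discount_weight holding_threshold y"
proof -
  let ?t = "holding_threshold y" and ?\<gamma> = "total_rate \<Gamma> y"
  have t: "0 < ?t" "?t \<le> 1" using holding_threshold_pos[of y] by (auto simp: holding_threshold_def)
  have "?\<gamma> * ?t \<le> 1"
    using total_rate_pos[of y] by (simp add: holding_threshold_def min_def field_simps)
  then have e1: "exp (-1) \<le> exp (- ?\<gamma> * ?t)" by simp
  have "?t * exp (- ?t) \<le> 1 - exp (- ?t)"
    using exp_ge_add_one_self[of ?t] by (simp add: exp_minus field_simps)
  moreover have "?t * exp (-1) \<le> ?t * exp (- ?t)" using t by (intro mult_left_mono) auto
  ultimately have "?t * exp (-1) \<le> 1 - exp (- ?t)" by linarith
  then have "?t * exp (-1) * exp (-1) \<le> (1 - exp (- ?t)) * exp (- ?\<gamma> * ?t)"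
    using e1 t by (intro mult_mono) auto
  moreover have "exp (-2::real) = exp (-1) * exp (-1)" by (simp flip: exp_add)
  ultimately show ?thesis by (simp add: discount_weight_def mult.commute mult.left_commute)
qed

text \<open>The threshold \<open>min 1 (1/\<gamma>)\<close> makes the weight comparable to the mean holding time \<open>1/\<gamma>\<close>,
  which is exactly the drift allowed for the Lyapunov function.\<close>

lemma kernel_iterate_discount_tendsto_0:
  assumes h_nonneg: "\<And>y. 0 \<le> h y" and h_finite_sublevel: "\<And>C. finite {y. h y \<le> C}"
    and h_integrable: "\<And>y. integrable (jump_kernel y) h"
    and h_drift: "\<And>y. (\<integral>z. h z \<partial>jump_kernel y) \<le> h y + 1 / total_rate \<Gamma> y"
  shows "(\<lambda>n. kernel_iterate jump_kernel (\<lambda>y. 1 - discount_weight holding_threshold y) n x) \<longlonglongrightarrow> 0"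
proof -
  let ?\<psi> = "discount_weight holding_threshold"
  have \<psi>_bounds: "0 \<le> ?\<psi> y \<and> ?\<psi> y \<le> 1" for y
    using holding_threshold_pos[of y] by (intro discount_weight_bounds) simp
  then have "0 \<le> 1 - ?\<psi> y" "1 - ?\<psi> y \<le> 1" for y by auto
  from kernel_iterate_limit[of "\<lambda>y. 1 - ?\<psi> y", OF this]
  obtain v where lim: "\<And>y. (\<lambda>n. kernel_iterate jump_kernel (\<lambda>y. 1 - ?\<psi> y) n y) \<longlonglongrightarrow> v y"
    and v_bounds: "\<And>y. 0 \<le> v y \<and> v y \<le> 1"
    and v_fixpoint: "\<And>y. v y = (1 - ?\<psi> y) * (\<integral>z. v z \<partial>jump_kernel y)"
    by blast
  have "v x = 0"
  proof (rule kernel_fixpoint_eq_0[OF v_bounds v_fixpoint, where h = h])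
    show "exp (-2) * min 1 (1 / total_rate \<Gamma> y) \<le> ?\<psi> y" for y
      using discount_weight_holding_threshold_ge[of y] by (simp add: holding_threshold_def)
    show "0 < 1 / total_rate \<Gamma> y" for y using total_rate_pos[of y] by simp
  qed (simp_all add: h_nonneg h_finite_sublevel h_integrable h_drift)
  with lim[of x] show ?thesis by simp
qed

end

section \<open>Holding times of the chain\<close>

lemma prod_linear_in_factor:
  fixes u v w :: "nat \<Rightarrow> real"
  assumes "m < n" and "\<And>k. k < n \<Longrightarrow> k \<noteq> m \<Longrightarrow> u k = v k"
    and "\<And>k. k < n \<Longrightarrow> k \<noteq> m \<Longrightarrow> u k = w k" and "u m = v m - c * w m"
  shows "(\<Prod>k<n. u k) = (\<Prod>k<n. v k) - c * (\<Prod>k<n. w k)"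
proof -
  have m: "m \<in> {..<n}" using assms by simp
  have "(\<Prod>k\<in>{..<n} - {m}. u k) = (\<Prod>k\<in>{..<n} - {m}. v k)"
    using assms(2) by (intro prod.cong) auto
  moreover have "(\<Prod>k\<in>{..<n} - {m}. u k) = (\<Prod>k\<in>{..<n} - {m}. w k)"
    using assms(3) by (intro prod.cong) auto
  ultimately show ?thesis
    using prod.remove[OF finite_lessThan m, of u] prod.remove[OF finite_lessThan m, of v]
      prod.remove[OF finite_lessThan m, of w] assms(4)
    by (simp add: algebra_simps)
qed

lemma prod_of_bool: "finite A \<Longrightarrow> (\<Prod>x\<in>A. of_bool (P x) :: 'b::comm_semiring_1) = of_bool (\<forall>x\<in>A. P x)"
  by (induction A rule: finite_induct) auto

definition discount_factor :: "real \<Rightarrow> real \<Rightarrow> real" where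
  "discount_factor t s = of_bool (0 < s) - (1 - exp (- t)) * of_bool (t < s)"

lemma exp_le_discount_factor: "0 < s \<Longrightarrow> exp (- s) \<le> discount_factor t s"
  by (auto simp: discount_factor_def)

lemma discount_factor_bounds: "0 \<le> t \<Longrightarrow> 0 \<le> discount_factor t s \<and> discount_factor t s \<le> 1"
  by (auto simp: discount_factor_def)

locale ctmc_from_state = jump_generator \<Gamma> for \<Gamma> :: "'a::countable \<Rightarrow> 'a \<Rightarrow> real" +
  fixes x\<^sub>0 :: 'a and M :: "'w measure" and \<xi> :: "nat \<Rightarrow> 'w \<Rightarrow> 'a" and \<sigma> :: "nat \<Rightarrow> 'w \<Rightarrow> real"
  assumes ctmc: "ctmc_from \<Gamma> x\<^sub>0 M \<xi> \<sigma>"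
begin

sublocale prob_space M
  using ctmc unfolding ctmc_from_def by blast

lemma measurable_\<xi>[measurable]: "\<xi> k \<in> measurable M (count_space UNIV)"
  using ctmc unfolding ctmc_from_def by blast

lemma measurable_\<sigma>[measurable]: "\<sigma> k \<in> borel_measurable M"
  using ctmc unfolding ctmc_from_def by blast

definition path_event :: "nat \<Rightarrow> (nat \<Rightarrow> 'a) \<Rightarrow> 'w set" where
  "path_event n xs = {\<omega> \<in> space M. \<forall>k\<le>n. \<xi> k \<omega> = xs k}"

lemma path_event_sets[measurable]: "path_event n xs \<in> sets M"
  unfolding path_event_def by measurable

definition path_weight :: "nat \<Rightarrow> (nat \<Rightarrow> 'a) \<Rightarrow> real" where
  "path_weight n xs = of_bool (xs 0 = x\<^sub>0) * (\<Prod>k<n. jump_matrix \<Gamma> (xs k) (xs (Suc k)))"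

lemma integral_path_event_holding_times_gt:
  assumes "\<forall>k. 0 \<le> s k"
  shows "(\<integral>\<omega>. indicator (path_event n xs) \<omega> * (\<Prod>k<n. of_bool (s k < \<sigma> (Suc k) \<omega>)) \<partial>M)
       = path_weight n xs * (\<Prod>k<n. exp (- total_rate \<Gamma> (xs k) * s k))"
proof -
  let ?E = "{\<omega> \<in> space M. (\<forall>k\<le>n. \<xi> k \<omega> = xs k) \<and> (\<forall>k<n. s k < \<sigma> (Suc k) \<omega>)}"
  have "(\<integral>\<omega>. indicator (path_event n xs) \<omega> * (\<Prod>k<n. of_bool (s k < \<sigma> (Suc k) \<omega>)) \<partial>M)
      = (\<integral>\<omega>. indicator ?E \<omega> \<partial>M :: real)"
    by (intro Bochner_Integration.integral_cong)
      (auto simp: path_event_def indicator_def prod_of_bool)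
  also have "\<dots> = measure M ?E" by simp
  also have "\<dots> = path_weight n xs * (\<Prod>k<n. exp (- total_rate \<Gamma> (xs k) * s k))"
    using ctmc assms unfolding ctmc_from_def path_weight_def by (simp add: prod.distrib)
  finally show ?thesis .
qed

text \<open>Expanding the first \<open>m\<close> factors one at a time reduces the expectation to the
  finite-dimensional distributions of \<open>ctmc_from\<close>.\<close>

lemma integral_path_event_prod:
  assumes "m \<le> n" and s: "\<forall>k. 0 \<le> s k" and t: "\<forall>k. 0 \<le> t k" and a: "\<forall>k. 0 \<le> a k \<and> a k \<le> 1"
  shows "(\<integral>\<omega>. indicator (path_event n xs) \<omega> *
            (\<Prod>k<n. if k < m then of_bool (0 < \<sigma> (Suc k) \<omega>) - a k * of_bool (t k < \<sigma> (Suc k) \<omega>)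
                     else of_bool (s k < \<sigma> (Suc k) \<omega>)) \<partial>M)
       = path_weight n xs * (\<Prod>k<n. if k < m then 1 - a k * exp (- total_rate \<Gamma> (xs k) * t k)
                                   else exp (- total_rate \<Gamma> (xs k) * s k))"
  using assms(1) s
proof (induction m arbitrary: s)
  case 0
  then show ?case using integral_path_event_holding_times_gt[of s] by simp
next
  case (Suc m)
  let ?F = "\<lambda>s \<omega>. \<Prod>k<n. if k < m then of_bool (0 < \<sigma> (Suc k) \<omega>) - a k * of_bool (t k < \<sigma> (Suc k) \<omega>)
                          else of_bool (s k < \<sigma> (Suc k) \<omega>)"
  let ?P = "\<lambda>s. \<Prod>k<n. if k < m then 1 - a k * exp (- total_rate \<Gamma> (xs k) * t k)
                       else exp (- total_rate \<Gamma> (xs k) * s k)"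
  let ?s\<^sub>0 = "s(m := 0)" and ?s\<^sub>1 = "s(m := t m)"
  have m: "m < n" using Suc by simp
  have integrable: "integrable M (\<lambda>\<omega>. indicator (path_event n xs) \<omega> * ?F s' \<omega>)" for s'
  proof (rule integrable_const_bound[where B = 1])
    have "\<bar>?F s' \<omega>\<bar> \<le> 1" for \<omega>
      unfolding abs_prod using a t by (intro prod_le_1) auto
    then show "AE \<omega> in M. norm (indicator (path_event n xs) \<omega> * ?F s' \<omega>) \<le> 1"
      by (auto simp: indicator_def)
  qed measurable
  have "(\<Prod>k<n. if k < Suc m then of_bool (0 < \<sigma> (Suc k) \<omega>) - a k * of_bool (t k < \<sigma> (Suc k) \<omega>)
                else of_bool (s k < \<sigma> (Suc k) \<omega>)) = ?F ?s\<^sub>0 \<omega> - a m * ?F ?s\<^sub>1 \<omega>" for \<omega>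
    by (rule prod_linear_in_factor[OF m]) auto
  moreover have "(\<Prod>k<n. if k < Suc m then 1 - a k * exp (- total_rate \<Gamma> (xs k) * t k)
                else exp (- total_rate \<Gamma> (xs k) * s k)) = ?P ?s\<^sub>0 - a m * ?P ?s\<^sub>1"
    by (rule prod_linear_in_factor[OF m]) auto
  moreover have "(\<integral>\<omega>. indicator (path_event n xs) \<omega> * (?F ?s\<^sub>0 \<omega> - a m * ?F ?s\<^sub>1 \<omega>) \<partial>M)
      = (\<integral>\<omega>. indicator (path_event n xs) \<omega> * ?F ?s\<^sub>0 \<omega> \<partial>M)
        - a m * (\<integral>\<omega>. indicator (path_event n xs) \<omega> * ?F ?s\<^sub>1 \<omega> \<partial>M)"
    using integrable by (simp add: right_diff_distrib mult.left_commute)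
  ultimately show ?case
    using Suc.IH[of ?s\<^sub>0] Suc.IH[of ?s\<^sub>1] Suc.prems t by (simp add: right_diff_distrib)
qed

lemma path_event_iff:
  assumes "\<omega> \<in> space M"
  shows "length l = Suc n \<and> \<omega> \<in> path_event n ((!) l) \<longleftrightarrow> l = map (\<lambda>k. \<xi> k \<omega>) [0..<Suc n]"
proof
  assume l: "length l = Suc n \<and> \<omega> \<in> path_event n ((!) l)"
  show "l = map (\<lambda>k. \<xi> k \<omega>) [0..<Suc n]"
  proof (rule nth_equalityI)
    fix i assume "i < length l"
    with l show "l ! i = map (\<lambda>k. \<xi> k \<omega>) [0..<Suc n] ! i"
      unfolding path_event_def by (simp del: upt_Suc add: nth_map_upt)
  qed (use l in simp)
qed (use assms in \<open>auto simp: path_event_def simp del: upt_Suc\<close>)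

definition holding_discount :: "('a \<Rightarrow> real) \<Rightarrow> nat \<Rightarrow> 'w \<Rightarrow> real" where
  "holding_discount T n \<omega> = (\<Prod>k<n. discount_factor (T (\<xi> k \<omega>)) (\<sigma> (Suc k) \<omega>))"

lemma borel_measurable_holding_discount[measurable]: "holding_discount T n \<in> borel_measurable M"
  unfolding holding_discount_def discount_factor_def by measurable

lemma holding_discount_bounds:
  "(\<And>y. 0 \<le> T y) \<Longrightarrow> 0 \<le> holding_discount T n \<omega> \<and> holding_discount T n \<omega> \<le> 1"
  unfolding holding_discount_def using discount_factor_bounds by (auto intro!: prod_nonneg prod_le_1)

lemma integral_path_event_holding_discount:
  assumes T: "\<And>y. 0 \<le> T y" and l: "length l = Suc n"
  shows "(\<integral>\<omega>. indicator (path_event n ((!) l)) \<omega> * holding_discount T n \<omega> \<partial>M)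
       = pmf (kernel_paths jump_kernel x\<^sub>0 n) l * (\<Prod>k<n. 1 - discount_weight T (l ! k))"
proof -
  let ?a = "\<lambda>k. 1 - exp (- T (l ! k))" and ?t = "\<lambda>k. T (l ! k)"
  have "(\<integral>\<omega>. indicator (path_event n ((!) l)) \<omega> * holding_discount T n \<omega> \<partial>M)
      = (\<integral>\<omega>. indicator (path_event n ((!) l)) \<omega> *
           (\<Prod>k<n. if k < n then of_bool (0 < \<sigma> (Suc k) \<omega>) - ?a k * of_bool (?t k < \<sigma> (Suc k) \<omega>)
                    else of_bool (0 < \<sigma> (Suc k) \<omega>)) \<partial>M)"
    by (intro Bochner_Integration.integral_cong)
      (auto simp: indicator_def path_event_def holding_discount_def discount_factor_def intro!: prod.cong)
  also have "\<dots> = path_weight n ((!) l) * (\<Prod>k<n. if k < n then 1 - ?a k * exp (- total_rate \<Gamma> (l ! k) * ?t k)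
                                                else exp (- total_rate \<Gamma> (l ! k) * 0))"
    using T by (intro integral_path_event_prod) auto
  also have "\<dots> = pmf (kernel_paths jump_kernel x\<^sub>0 n) l * (\<Prod>k<n. 1 - discount_weight T (l ! k))"
    using l by (simp add: path_weight_def pmf_kernel_paths pmf_jump_kernel discount_weight_def)
  finally show ?thesis .
qed

text \<open>Summing over all possible jump paths turns the expectation into the iterated kernel.\<close>

lemma nn_integral_holding_discount:
  assumes T: "\<And>y. 0 \<le> T y"
  shows "(\<integral>\<^sup>+\<omega>. holding_discount T n \<omega> \<partial>M) = kernel_iterate jump_kernel (\<lambda>y. 1 - discount_weight T y) n x\<^sub>0"
proof -
  let ?F = "\<lambda>l \<omega>. ennreal (indicator (path_event n ((!) l)) \<omega> * holding_discount T n \<omega>) * of_bool (length l = Suc n)"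
  have discount_bounds: "0 \<le> 1 - discount_weight T y \<and> 1 - discount_weight T y \<le> 1" for y
    using discount_weight_bounds[of T y] T by auto
  have "(\<integral>\<^sup>+\<omega>. holding_discount T n \<omega> \<partial>M) = (\<integral>\<^sup>+\<omega>. (\<integral>\<^sup>+l. ?F l \<omega> \<partial>count_space UNIV) \<partial>M)"
  proof (rule nn_integral_cong)
    fix \<omega> assume \<omega>: "\<omega> \<in> space M"
    have "?F l \<omega> = ennreal (holding_discount T n \<omega>) * indicator {map (\<lambda>k. \<xi> k \<omega>) [0..<Suc n]} l" for l
      using path_event_iff[OF \<omega>, of l n] by (auto simp: indicator_def)
    then show "ennreal (holding_discount T n \<omega>) = (\<integral>\<^sup>+l. ?F l \<omega> \<partial>count_space UNIV)" by simp
  qed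
  also have "\<dots> = (\<integral>\<^sup>+l. (\<integral>\<^sup>+\<omega>. ?F l \<omega> \<partial>M) \<partial>count_space UNIV)"
    by (rule nn_integral_count_space_nn_integral) auto
  also have "\<dots> = (\<integral>\<^sup>+l. pmf (kernel_paths jump_kernel x\<^sub>0 n) l * ennreal (\<Prod>k<n. 1 - discount_weight T (l ! k)) \<partial>count_space UNIV)"
  proof (intro nn_integral_cong)
    fix l :: "'a list"
    show "(\<integral>\<^sup>+\<omega>. ?F l \<omega> \<partial>M) = pmf (kernel_paths jump_kernel x\<^sub>0 n) l * ennreal (\<Prod>k<n. 1 - discount_weight T (l ! k))"
    proof (cases "length l = Suc n")
      case True
      have "integrable M (\<lambda>\<omega>. indicator (path_event n ((!) l)) \<omega> * holding_discount T n \<omega>)"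
        using holding_discount_bounds[OF T]
        by (intro integrable_const_bound[where B = 1]) (auto simp: indicator_def)
      then have "(\<integral>\<^sup>+\<omega>. ?F l \<omega> \<partial>M) = ennreal (\<integral>\<omega>. indicator (path_event n ((!) l)) \<omega> * holding_discount T n \<omega> \<partial>M)"
        using True holding_discount_bounds[OF T] by (simp add: nn_integral_eq_integral)
      then show ?thesis
        using True discount_bounds
        by (simp add: integral_path_event_holding_discount[OF T] ennreal_mult prod_nonneg)
    qed (simp add: pmf_kernel_paths)
  qed
  also have "\<dots> = (\<integral>\<^sup>+l. ennreal (\<Prod>k<n. 1 - discount_weight T (l ! k)) \<partial>kernel_paths jump_kernel x\<^sub>0 n)"
    by (simp add: nn_integral_measure_pmf)
  also have "\<dots> = kernel_iterate jump_kernel (\<lambda>y. 1 - discount_weight T y) n x\<^sub>0"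
    using discount_bounds by (intro kernel_iterate_eq_nn_integral_paths[symmetric]) auto
  finally show ?thesis .
qed

lemma AE_holding_times_pos: "AE \<omega> in M. \<forall>k<n. 0 < \<sigma> (Suc k) \<omega>"
proof -
  have "(\<integral>\<^sup>+\<omega>. indicator {\<omega> \<in> space M. \<forall>k<n. 0 < \<sigma> (Suc k) \<omega>} \<omega> \<partial>M)
      = (\<integral>\<^sup>+\<omega>. holding_discount (\<lambda>_. 0) n \<omega> \<partial>M)"
    by (intro nn_integral_cong)
      (auto simp: holding_discount_def discount_factor_def indicator_def prod_of_bool)
  also have "\<dots> = 1"
    by (subst nn_integral_holding_discount) (simp_all add: discount_weight_def)
  finally have "prob {\<omega> \<in> space M. \<forall>k<n. 0 < \<sigma> (Suc k) \<omega>} = 1"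
    by (simp add: emeasure_eq_measure)
  then show ?thesis by (subst (asm) prob_Collect_eq_1) simp_all
qed

lemma exp_neg_le_holding_discount:
  assumes pos: "\<forall>k<n. 0 < \<sigma> (Suc k) \<omega>" and R: "0 \<le> R" and \<zeta>: "explosion_time \<sigma> \<omega> \<le> ennreal R"
  shows "exp (- R) \<le> holding_discount T n \<omega>"
proof -
  have "ennreal (\<Sum>k<n. \<sigma> (Suc k) \<omega>) = (\<Sum>k<n. ennreal (\<sigma> (Suc k) \<omega>))"
    using pos by (intro sum_ennreal[symmetric]) auto
  also have "\<dots> \<le> explosion_time \<sigma> \<omega>"
    unfolding explosion_time_def by (intro sum_le_suminf) auto
  also note \<zeta>
  finally have "(\<Sum>k<n. \<sigma> (Suc k) \<omega>) \<le> R" using R by simp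
  then have "exp (- R) \<le> (\<Prod>k<n. exp (- \<sigma> (Suc k) \<omega>))"
    by (simp add: exp_sum[symmetric] sum_negf)
  also have "\<dots> \<le> holding_discount T n \<omega>"
    unfolding holding_discount_def using pos by (intro prod_mono) (auto intro: exp_le_discount_factor)
  finally show ?thesis .
qed

lemma measurable_explosion_time[measurable]: "explosion_time \<sigma> \<in> borel_measurable M"
  unfolding explosion_time_def by measurable

lemma prob_explosion_time_le:
  assumes T: "\<And>y. 0 \<le> T y" and R: "0 \<le> R"
  shows "\<P>(\<omega> in M. explosion_time \<sigma> \<omega> \<le> ennreal R)
           \<le> exp R * kernel_iterate jump_kernel (\<lambda>y. 1 - discount_weight T y) n x\<^sub>0"
proof -
  let ?E = "{\<omega> \<in> space M. explosion_time \<sigma> \<omega> \<le> ennreal R}"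
  let ?u = "kernel_iterate jump_kernel (\<lambda>y. 1 - discount_weight T y) n x\<^sub>0"
  have "ennreal (exp (- R) * prob ?E) = (\<integral>\<^sup>+\<omega>. ennreal (exp (- R)) * indicator ?E \<omega> \<partial>M)"
    by (simp add: nn_integral_cmult_indicator emeasure_eq_measure ennreal_mult)
  also have "\<dots> \<le> (\<integral>\<^sup>+\<omega>. holding_discount T n \<omega> \<partial>M)"
  proof (rule nn_integral_mono_AE)
    show "AE \<omega> in M. ennreal (exp (- R)) * indicator ?E \<omega> \<le> ennreal (holding_discount T n \<omega>)"
      using AE_holding_times_pos[of n]
    proof eventually_elim
      case (elim \<omega>)
      then show ?case
        using exp_neg_le_holding_discount[OF _ R] holding_discount_bounds[OF T]
        by (auto simp: indicator_def intro: ennreal_leI)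
    qed
  qed
  also have "\<dots> = ?u"
    using T by (rule nn_integral_holding_discount)
  finally have le: "ennreal (exp (- R) * prob ?E) \<le> ennreal ?u" .
  have "\<And>y. 0 \<le> 1 - discount_weight T y" "\<And>y. 1 - discount_weight T y \<le> 1"
    using discount_weight_bounds T by (simp_all add: discount_weight_def)
  from kernel_iterate_bounds[where \<phi> = "\<lambda>y. 1 - discount_weight T y", OF this] have "0 \<le> ?u" by blast
  with le have "exp (- R) * prob ?E \<le> ?u" by simp
  then show ?thesis by (simp add: exp_minus field_simps)
qed

lemma prob_explosion_time_infinite:
  assumes T: "\<And>y. 0 \<le> T y"
    and lim: "(\<lambda>n. kernel_iterate jump_kernel (\<lambda>y. 1 - discount_weight T y) n x\<^sub>0) \<longlonglongrightarrow> 0"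
  shows "\<P>(\<omega> in M. explosion_time \<sigma> \<omega> = \<infinity>) = 1"
proof -
  have "\<P>(\<omega> in M. explosion_time \<sigma> \<omega> \<le> ennreal (real N)) = 0" for N
  proof -
    have "(\<lambda>n. exp (real N) * kernel_iterate jump_kernel (\<lambda>y. 1 - discount_weight T y) n x\<^sub>0) \<longlonglongrightarrow> 0"
      using tendsto_mult_right_zero[OF lim] by simp
    then have "\<P>(\<omega> in M. explosion_time \<sigma> \<omega> \<le> ennreal (real N)) \<le> 0"
      by (rule LIMSEQ_le_const) (use prob_explosion_time_le[OF T, of "real N"] in auto)
    then show ?thesis by (simp add: order_antisym)
  qed
  then have "AE \<omega> in M. \<not> explosion_time \<sigma> \<omega> \<le> ennreal (real N)" for N
    by (subst prob_Collect_eq_0[symmetric]) simp_all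
  then have "AE \<omega> in M. \<forall>N. \<not> explosion_time \<sigma> \<omega> \<le> ennreal (real N)"
    by (simp add: AE_all_countable)
  then have "AE \<omega> in M. explosion_time \<sigma> \<omega> = \<infinity>"
  proof eventually_elim
    case (elim \<omega>)
    show ?case
    proof (rule ccontr)
      assume "explosion_time \<sigma> \<omega> \<noteq> \<infinity>"
      then obtain N where "explosion_time \<sigma> \<omega> < of_nat N"
        using ennreal_Ex_less_of_nat by (auto simp: less_top)
      with elim show False by (metis ennreal_of_nat_eq_real_of_nat less_imp_le)
    qed
  qed
  then show ?thesis by (subst prob_Collect_eq_1) simp_all
qed

end

theorem theorem1p5:
  fixes \<Gamma> :: "'a::countable \<Rightarrow> 'a \<Rightarrow> real"
    and f :: "'a \<Rightarrow> real"
    and g :: "real \<Rightarrow> real"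
  assumes X_inf: "infinite (UNIV :: 'a set)"
    and gen: "is_generator \<Gamma>"
    and irr: "jump_irreducible \<Gamma>"
    and f_dom: "in_Dom \<Gamma> f"
    and f_nonneg: "\<forall>x. 0 \<le> f x"
    and f_inf: "tends_to_infinity f"
    and g_mono: "mono_on {0..} g"
    and g_nonneg: "\<forall>y\<ge>0. 0 \<le> g y"
    and G_fin: "\<forall>z\<ge>0. set_nn_integral lborel {0..z} (\<lambda>y. inverse (ennreal (g y))) < \<infinity>"
    and G_lim: "((\<lambda>z. set_nn_integral lborel {0..z} (\<lambda>y. inverse (ennreal (g y)))) \<longlongrightarrow> \<infinity>) at_top"
    and drift: "\<forall>x. gen_apply \<Gamma> f x \<le> g (f x)"
  shows "\<forall>x (M :: 'w measure) \<xi> \<sigma>. ctmc_from \<Gamma> x M \<xi> \<sigma> \<longrightarrow>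
           measure M {\<omega> \<in> space M. explosion_time \<sigma> \<omega> = \<infinity>} = 1"
proof (intro allI impI)
  fix x :: 'a and M :: "'w measure" and \<xi> \<sigma>
  assume "ctmc_from \<Gamma> x M \<xi> \<sigma>"
  then interpret ctmc_from_state \<Gamma> x M \<xi> \<sigma>
    using gen by unfold_locales
  interpret drift_condition \<Gamma> g f
    using gen g_mono g_nonneg G_fin f_dom f_nonneg f_inf G_lim drift by unfold_locales
  have "(\<lambda>n. kernel_iterate jump_kernel (\<lambda>y. 1 - discount_weight holding_threshold y) n x) \<longlonglongrightarrow> 0"
    using G_nonneg finite_sublevel_G_f integrable_G_f integral_G_f_le
    by (rule kernel_iterate_discount_tendsto_0)
  then show "\<P>(\<omega> in M. explosion_time \<sigma> \<omega> = \<infinity>) = 1"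
    using holding_threshold_pos less_imp_le by (intro prob_explosion_time_infinite) auto
qed

end
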